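(* Let $\mathcal{H}$ be a complex Hilbert space and let $T, S\in\mathbb{B}(\mathcal{H})$. If $N(\cdot)$ is an algebra norm on $\mathbb{B}(\mathcal{H})$, then for each choice of sign, $$w_{N}(TS \pm ST^* ) \leq w_{N}(S)\big(N(T) + N(T^* )\big).$$ In particular, if $N(\cdot)$ is a self-adjoint algebra norm, then $w_{N}(TS \pm ST^* ) \leq 2w_{N}(S)N(T)$.
   Context: $\mathbb{B}(\mathcal{H})$ is the algebra of bounded linear operators on $\mathcal{H}$. A norm $N(\cdot)$ on $\mathbb{B}(\mathcal{H})$ is an algebra norm if $N(TS)\le N(T)N(S)$ for all $T,S$, and is self-adjoint if $N(T^* )=N(T)$ for all $T$. For $A\in\mathbb{B}(\mathcal{H})$, ${\rm Re}(A)=\frac{A+A^*}{2}$. The generalized numerical radius is $w_N(T)=\sup_{\theta\in\mathbb{R}} N\big({\rm Re}(e^{i\theta}T)\big)$. *)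

theory Defs
  imports "HOL-Analysis.Analysis"
begin

text \<open>Complex Hilbert spaces: a (real) Banach space equipped with a complex
scalar multiplication compatible with the real one, and a complex inner product
(conjugate-linear in the first argument, linear in the second) inducing the norm.\<close>

class complex_hilbert = banach +
  fixes scaleC :: "complex \<Rightarrow> 'a \<Rightarrow> 'a" (infixr "*\<^sub>C" 75)
    and cinner :: "'a \<Rightarrow> 'a \<Rightarrow> complex"
  assumes scaleC_add_right: "a *\<^sub>C (x + y) = a *\<^sub>C x + a *\<^sub>C y"
    and scaleC_add_left: "(a + b) *\<^sub>C x = a *\<^sub>C x + b *\<^sub>C x"
    and scaleC_scaleC: "a *\<^sub>C (b *\<^sub>C x) = (a * b) *\<^sub>C x"
    and scaleC_one: "1 *\<^sub>C x = x"
    and scaleC_of_real: "complex_of_real r *\<^sub>C x = r *\<^sub>R x"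
    and cinner_conj: "cinner x y = cnj (cinner y x)"
    and cinner_add_right: "cinner x (y + z) = cinner x y + cinner x z"
    and cinner_scaleC_right: "cinner x (a *\<^sub>C y) = a * cinner x y"
    and cinner_self_nonneg: "0 \<le> Re (cinner x x)"
    and cinner_self_eq_zero: "cinner x x = 0 \<longleftrightarrow> x = 0"
    and norm_cinner: "norm x = sqrt (Re (cinner x x))"

definition bounded_clinear_op :: "('a::complex_hilbert \<Rightarrow> 'a) \<Rightarrow> bool" where
  "bounded_clinear_op T \<longleftrightarrow>
     (\<forall>x y. T (x + y) = T x + T y) \<and> (\<forall>c x. T (c *\<^sub>C x) = c *\<^sub>C T x) \<and>
     (\<exists>K. \<forall>x. norm (T x) \<le> norm x * K)"

definition cadjoint :: "('a::complex_hilbert \<Rightarrow> 'a) \<Rightarrow> ('a \<Rightarrow> 'a)" where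
  "cadjoint T = (SOME S. \<forall>x y. cinner (T x) y = cinner x (S y))"

definition opRe :: "('a::complex_hilbert \<Rightarrow> 'a) \<Rightarrow> ('a \<Rightarrow> 'a)" where
  "opRe A = (\<lambda>x. (1/2) *\<^sub>C (A x + cadjoint A x))"

definition algebra_norm :: "(('a::complex_hilbert \<Rightarrow> 'a) \<Rightarrow> real) \<Rightarrow> bool" where
  "algebra_norm N \<longleftrightarrow>
     (\<forall>T. bounded_clinear_op T \<longrightarrow> 0 \<le> N T \<and> (N T = 0 \<longleftrightarrow> T = (\<lambda>x. 0))) \<and>
     (\<forall>c T. bounded_clinear_op T \<longrightarrow> N (\<lambda>x. c *\<^sub>C T x) = cmod c * N T) \<and>
     (\<forall>T S. bounded_clinear_op T \<and> bounded_clinear_op S \<longrightarrow> N (\<lambda>x. T x + S x) \<le> N T + N S) \<and>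
     (\<forall>T S. bounded_clinear_op T \<and> bounded_clinear_op S \<longrightarrow> N (T \<circ> S) \<le> N T * N S)"

definition self_adjoint_norm :: "(('a::complex_hilbert \<Rightarrow> 'a) \<Rightarrow> real) \<Rightarrow> bool" where
  "self_adjoint_norm N \<longleftrightarrow> (\<forall>T. bounded_clinear_op T \<longrightarrow> N (cadjoint T) = N T)"

definition wN :: "(('a::complex_hilbert \<Rightarrow> 'a) \<Rightarrow> real) \<Rightarrow> ('a \<Rightarrow> 'a) \<Rightarrow> real" where
  "wN N T = (SUP \<theta>\<in>(UNIV::real set). N (opRe (\<lambda>x. exp (\<i> * complex_of_real \<theta>) *\<^sub>C T x)))"

end

theory Submission
  imports Defs
begin

(* Write T' for the adjoint of T. For |c| = 1 let R = Re(c S). Then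
   Re(c (TS + ST')) = T R + R T' and Re(c (TS - ST')) = -i (T R' - R' T') with R' = Re(i c S).
   The triangle inequality and submultiplicativity of N bound the norm of either operator by
   N(R) (N(T) + N(T')), and N(R) <= w_N(S) since |c| = |i c| = 1.
   The adjoint is only introduced by choice, so its existence has to be proved: this is the
   Riesz representation theorem. A bounded functional f attains M = sup Re f on the unit
   sphere, because the parallelogram law makes every maximizing sequence Cauchy; the maximizer
   u is orthogonal to the kernel of f, whence f = M <u, _>. *)

section \<open>Inner product calculus\<close>

lemma cinner_add_left: "cinner (x + y) (z::'a::complex_hilbert) = cinner x z + cinner y z"
  using cinner_conj[of "x + y" z] cinner_conj[of x z] cinner_conj[of y z]
  by (simp add: cinner_add_right)

lemma cinner_scaleC_left: "cinner (c *\<^sub>C x) (y::'a::complex_hilbert) = cnj c * cinner x y"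
  using cinner_conj[of "c *\<^sub>C x" y] cinner_conj[of x y] by (simp add: cinner_scaleC_right)

lemma scaleC_zero_left [simp]: "0 *\<^sub>C (x::'a::complex_hilbert) = 0"
  using scaleC_of_real[of 0 x] by simp

lemma scaleC_minus1: "(-1) *\<^sub>C (x::'a::complex_hilbert) = - x"
  using scaleC_of_real[of "-1" x] by simp

lemma scaleC_minus_left: "(- c) *\<^sub>C (x::'a::complex_hilbert) = - (c *\<^sub>C x)"
  using scaleC_scaleC[of "-1" c x] by (simp add: scaleC_minus1)

lemma scaleC_minus_right: "c *\<^sub>C (- x::'a::complex_hilbert) = - (c *\<^sub>C x)"
proof -
  have "c *\<^sub>C (0::'a) = 0"
    using scaleC_add_right[of c 0 0] by simp
  then have "c *\<^sub>C x + c *\<^sub>C (- x) = 0"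
    using scaleC_add_right[of c x "-x"] by simp
  then show ?thesis
    by (simp add: eq_neg_iff_add_eq_0 add.commute)
qed

lemma scaleC_diff_right: "c *\<^sub>C (x - y::'a::complex_hilbert) = c *\<^sub>C x - c *\<^sub>C y"
  by (simp only: diff_conv_add_uminus scaleC_add_right scaleC_minus_right)

lemma cinner_minus_left: "cinner (- x) (y::'a::complex_hilbert) = - cinner x y"
  using cinner_scaleC_left[of "-1" x y] by (simp add: scaleC_minus1)

lemma cinner_minus_right: "cinner x (- y::'a::complex_hilbert) = - cinner x y"
  using cinner_scaleC_right[of x "-1" y] by (simp add: scaleC_minus1)

lemma cinner_diff_left: "cinner (x - y) (z::'a::complex_hilbert) = cinner x z - cinner y z"
  by (simp only: diff_conv_add_uminus cinner_add_left cinner_minus_left)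

lemma cinner_diff_right: "cinner x (y - z::'a::complex_hilbert) = cinner x y - cinner x z"
  by (simp only: diff_conv_add_uminus cinner_add_right cinner_minus_right)

lemma power2_norm_eq_cinner: "norm (x::'a::complex_hilbert) ^ 2 = Re (cinner x x)"
  by (simp add: norm_cinner cinner_self_nonneg)

lemma cinner_self: "cinner (x::'a::complex_hilbert) x = complex_of_real (norm x ^ 2)"
proof -
  have "Im (cinner x x) = 0"
    using cinner_conj[of x x] by (simp add: complex_eq_iff)
  then show ?thesis
    by (simp add: power2_norm_eq_cinner complex_eq_iff)
qed

lemma norm_scaleC: "norm (c *\<^sub>C (x::'a::complex_hilbert)) = cmod c * norm x"
proof -
  have "norm (c *\<^sub>C x) ^ 2 = Re (cnj c * c * complex_of_real (norm x ^ 2))"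
    by (simp add: power2_norm_eq_cinner[of "c *\<^sub>C x"] cinner_scaleC_left cinner_scaleC_right
        cinner_self[of x] mult.assoc)
  also have "\<dots> = (cmod c * norm x) ^ 2"
    using cmod_power2[of c] by (simp add: power_mult_distrib power2_eq_square)
  finally show ?thesis
    by (simp add: power2_eq_iff_nonneg)
qed

lemma power2_norm_add_scaleC:
  fixes u x :: "'a::complex_hilbert"
  shows "norm (u + t *\<^sub>C x) ^ 2 = norm u ^ 2 + 2 * Re (t * cinner u x) + (cmod t * norm x) ^ 2"
proof -
  have "cnj t * t = complex_of_real (cmod t ^ 2)"
    using complex_norm_square[of t] by (simp add: mult.commute)
  then have "cinner (u + t *\<^sub>C x) (u + t *\<^sub>C x) = complex_of_real (norm u ^ 2)
      + (t * cinner u x + cnj (t * cinner u x)) + complex_of_real ((cmod t * norm x) ^ 2)"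
    by (simp add: cinner_add_left cinner_add_right cinner_scaleC_left cinner_scaleC_right
        cinner_conj[of x u] cinner_self[of u] cinner_self[of x] power_mult_distrib algebra_simps)
  then show ?thesis
    by (simp add: power2_norm_eq_cinner[of "u + t *\<^sub>C x"])
qed

lemma parallelogram_law:
  "norm (x + y) ^ 2 + norm (x - y) ^ 2 = 2 * norm x ^ 2 + 2 * norm (y::'a::complex_hilbert) ^ 2"
  by (simp add: power2_norm_eq_cinner cinner_add_left cinner_add_right cinner_diff_left
      cinner_diff_right)

lemma cinner_eq_right_imp_eq:
  assumes "\<And>x. cinner x u = cinner x (v::'a::complex_hilbert)"
  shows "u = v"
  using cinner_self_eq_zero[of "u - v"] by (simp add: cinner_diff_right assms)

lemma unimodular_rotation: "\<exists>c. cmod c = 1 \<and> c * z = complex_of_real (cmod z)"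
proof (cases "z = 0")
  case False
  have "cnj z * z = complex_of_real (cmod z) ^ 2"
    using complex_norm_square[of z] by (simp add: mult.commute)
  with False have "cnj (sgn z) * z = complex_of_real (cmod z)"
    by (simp add: sgn_div_norm scaleR_conv_of_real power2_eq_square mult.assoc)
  with False show ?thesis
    by (intro exI[of _ "cnj (sgn z)"]) (simp add: norm_sgn)
qed (intro exI[of _ 1], simp)

lemma cmod_le_Re_imp_of_real: "cmod z \<le> Re z \<Longrightarrow> z = complex_of_real (Re z)"
  using abs_Re_le_cmod[of z] abs_ge_self[of "Re z"] Im_eq_0[of z] by (simp add: complex_eq_iff)

lemma power2_norm_remove_component:
  fixes x y :: "'a::complex_hilbert"
  assumes "y \<noteq> 0"
  defines "t \<equiv> - cnj (cinner x y) / complex_of_real (norm y ^ 2)"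
  shows "norm (x + t *\<^sub>C y) ^ 2 = norm x ^ 2 - cmod (cinner x y) ^ 2 / norm y ^ 2"
proof -
  let ?a = "cinner x y"
  have "t * ?a = - complex_of_real (cmod ?a ^ 2 / norm y ^ 2)"
    using complex_norm_square[of ?a] by (simp add: t_def mult.commute)
  moreover have "cmod t * norm y = cmod ?a / norm y"
    using assms by (simp add: t_def norm_divide norm_mult power2_eq_square)
  ultimately show ?thesis
    by (simp add: power2_norm_add_scaleC power_divide)
qed

lemma cinner_cauchy_schwarz: "cmod (cinner x y) \<le> norm (x::'a::complex_hilbert) * norm y"
proof (cases "y = 0")
  case True
  then show ?thesis
    using cinner_add_right[of x 0 0] by simp
next
  case False
  have "cmod (cinner x y) ^ 2 / norm y ^ 2 \<le> norm x ^ 2"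
    using power2_norm_remove_component[OF False, of x] zero_le_power2 by (metis diff_ge_0_iff_ge)
  then have "cmod (cinner x y) ^ 2 \<le> (norm x * norm y) ^ 2"
    using False by (simp add: divide_le_eq power_mult_distrib)
  then show ?thesis
    by (simp add: power2_le_iff_abs_le)
qed

lemma cinner_eq_0_if_norm_le_norm_add:
  fixes u x :: "'a::complex_hilbert"
  assumes "\<And>t. norm u \<le> norm (u + t *\<^sub>C x)"
  shows "cinner u x = 0"
proof (cases "x = 0")
  case True
  then show ?thesis
    using cinner_add_right[of u 0 0] by simp
next
  case False
  have "norm u ^ 2 \<le> norm u ^ 2 - cmod (cinner u x) ^ 2 / norm x ^ 2"
    using power2_norm_remove_component[OF False, of u] assms by (metis norm_ge_zero power_mono)
  then show ?thesis
    using False by (simp add: divide_le_0_iff)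
qed

lemma power2_norm_diff_unit_le:
  fixes x y :: "'a::complex_hilbert"
  assumes "norm x = 1" "norm y = 1" "0 \<le> d" "2 - d \<le> norm (x + y)"
  shows "norm (x - y) ^ 2 \<le> 4 * d"
proof -
  have sum: "norm (x + y) ^ 2 + norm (x - y) ^ 2 = 4"
    using parallelogram_law[of x y] assms by simp
  show ?thesis
  proof (cases "d \<le> 2")
    case True
    then have "(2 - d) ^ 2 \<le> norm (x + y) ^ 2"
      using assms by (intro power_mono) auto
    with sum have "norm (x - y) ^ 2 \<le> 4 * d - d ^ 2"
      by (simp add: power2_eq_square algebra_simps)
    then show ?thesis
      by (smt (verit) zero_le_power2)
  next
    case False
    with sum show ?thesis
      by (smt (verit) zero_le_power2)
  qed
qed

section \<open>Riesz representation\<close>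

lemma Cauchy_if_maximizing:
  fixes f :: "'a::complex_hilbert \<Rightarrow> complex" and xs :: "nat \<Rightarrow> 'a"
  assumes add: "\<And>x y. f (x + y) = f x + f y"
    and bound: "\<And>x. cmod (f x) \<le> M * norm x" and "0 < M"
    and unit: "\<And>n. norm (xs n) = 1"
    and lim: "(\<lambda>n. Re (f (xs n))) \<longlonglongrightarrow> M"
  shows "Cauchy xs"
proof (rule metric_CauchyI)
  define d where "d n = 1 - Re (f (xs n)) / M" for n
  have d_nonneg: "0 \<le> d n" for n
    using complex_Re_le_cmod[of "f (xs n)"] bound[of "xs n"] \<open>0 < M\<close> by (simp add: d_def unit)
  have close: "norm (xs m - xs n) ^ 2 \<le> 4 * (d m + d n)" for m n
  proof (rule power2_norm_diff_unit_le[OF unit unit])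
    have "M * (2 - (d m + d n)) = Re (f (xs m + xs n))"
      using \<open>0 < M\<close> by (simp add: d_def add algebra_simps)
    also have "\<dots> \<le> M * norm (xs m + xs n)"
      using complex_Re_le_cmod bound order_trans by blast
    finally show "2 - (d m + d n) \<le> norm (xs m + xs n)"
      using \<open>0 < M\<close> by simp
  qed (use d_nonneg in auto)
  have "d \<longlonglongrightarrow> 1 - M / M"
    unfolding d_def by (intro tendsto_intros lim) (use \<open>0 < M\<close> in simp)
  then have "d \<longlonglongrightarrow> 0"
    using \<open>0 < M\<close> by simp
  fix e :: real
  assume "0 < e"
  then have "\<forall>\<^sub>F n in sequentially. d n < e ^ 2 / 8"
    by (intro order_tendstoD(2)[OF \<open>d \<longlonglongrightarrow> 0\<close>]) simp
  then obtain N where N: "\<And>n. n \<ge> N \<Longrightarrow> d n < e ^ 2 / 8"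
    unfolding eventually_sequentially by blast
  have "dist (xs m) (xs n) < e" if "m \<ge> N" "n \<ge> N" for m n
  proof -
    have "norm (xs m - xs n) ^ 2 < e ^ 2"
      using close[of m n] N[OF that(1)] N[OF that(2)] by simp
    then show ?thesis
      using \<open>0 < e\<close> by (simp add: dist_norm power2_less_imp_less)
  qed
  then show "\<exists>N. \<forall>m\<ge>N. \<forall>n\<ge>N. dist (xs m) (xs n) < e"
    by blast
qed

lemma bdd_above_Re_sphere:
  fixes f :: "'a::complex_hilbert \<Rightarrow> complex"
  assumes "\<And>x. cmod (f x) \<le> norm x * K"
  shows "bdd_above ((\<lambda>x. Re (f x)) ` sphere 0 1)"
proof (rule bdd_aboveI2)
  fix x :: 'a
  assume "x \<in> sphere 0 1"
  then show "Re (f x) \<le> K"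
    using complex_Re_le_cmod[of "f x"] assms[of x] by simp
qed

lemma cmod_le_SUP_Re_sphere:
  fixes f :: "'a::complex_hilbert \<Rightarrow> complex"
  assumes scal: "\<And>c x. f (c *\<^sub>C x) = c * f x"
    and bnd: "\<And>x. cmod (f x) \<le> norm x * K"
  shows "cmod (f x) \<le> (SUP y\<in>sphere 0 1. Re (f y)) * norm x"
proof (cases "x = 0")
  case True
  then show ?thesis
    using scal[of 0 0] by simp
next
  case False
  obtain c where c: "cmod c = 1" "c * f x = complex_of_real (cmod (f x))"
    using unimodular_rotation by blast
  define y where "y = (c / complex_of_real (norm x)) *\<^sub>C x"
  have "y \<in> sphere 0 1"
    using False c by (simp add: y_def norm_scaleC norm_divide)
  moreover have "f y = complex_of_real (cmod (f x) / norm x)"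
    by (simp add: y_def scal c(2)[symmetric])
  ultimately have "cmod (f x) / norm x \<le> (SUP y\<in>sphere 0 1. Re (f y))"
    by (metis Re_complex_of_real cSUP_upper bdd_above_Re_sphere[OF bnd])
  then show ?thesis
    using False by (simp add: divide_le_eq)
qed

lemma obtain_maximizing_sequence:
  fixes g :: "'a \<Rightarrow> real"
  assumes "A \<noteq> {}" "bdd_above (g ` A)"
  obtains xs where "\<And>n. xs n \<in> A" "(\<lambda>n. g (xs n)) \<longlonglongrightarrow> (SUP x\<in>A. g x)"
proof -
  have "(SUP x\<in>A. g x) \<in> closure (g ` A)"
    using assms by (intro closure_contains_Sup) auto
  then obtain ys where ys: "\<And>n. ys n \<in> g ` A" and "ys \<longlonglongrightarrow> (SUP x\<in>A. g x)"
    unfolding closure_sequential by blast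
  from ys have "\<forall>n. \<exists>x\<in>A. ys n = g x"
    by blast
  then obtain xs where xs: "\<And>n. xs n \<in> A" and ys_eq: "\<And>n. ys n = g (xs n)"
    by metis
  have "(\<lambda>n. g (xs n)) \<longlonglongrightarrow> (SUP x\<in>A. g x)"
    using \<open>ys \<longlonglongrightarrow> (SUP x\<in>A. g x)\<close> unfolding ys_eq[abs_def] .
  with xs show thesis
    by (rule that)
qed

lemma bounded_linear_if_clinear_bounded:
  fixes f :: "'a::complex_hilbert \<Rightarrow> complex"
  assumes add: "\<And>x y. f (x + y) = f x + f y"
    and scal: "\<And>c x. f (c *\<^sub>C x) = c * f x"
    and bnd: "\<And>x. cmod (f x) \<le> norm x * K"
  shows "bounded_linear f"
proof (rule bounded_linear_intro[of f K])
  show "f (r *\<^sub>R x) = r *\<^sub>R f x" for r x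
    using scal[of "complex_of_real r" x] by (simp add: scaleC_of_real scaleR_conv_of_real)
qed (use add bnd in auto)

lemma bounded_functional_attains_norm:
  fixes f :: "'a::complex_hilbert \<Rightarrow> complex"
  assumes add: "\<And>x y. f (x + y) = f x + f y"
    and scal: "\<And>c x. f (c *\<^sub>C x) = c * f x"
    and bnd: "\<And>x. cmod (f x) \<le> norm x * K"
    and "f x0 \<noteq> 0"
  shows "\<exists>u M. norm u = 1 \<and> 0 < M \<and> f u = complex_of_real M \<and> (\<forall>x. cmod (f x) \<le> M * norm x)"
proof -
  define M where "M = (SUP y\<in>sphere 0 1. Re (f y))"
  have bound: "cmod (f x) \<le> M * norm x" for x
    unfolding M_def by (rule cmod_le_SUP_Re_sphere[OF scal bnd])
  have "0 < M"
    using bound[of x0] \<open>f x0 \<noteq> 0\<close>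
    by (smt (verit) mult_nonpos_nonneg norm_ge_zero zero_less_norm_iff)
  have "x0 \<noteq> 0"
    using scal[of 0 0] \<open>f x0 \<noteq> 0\<close> by auto
  then have "complex_of_real (1 / norm x0) *\<^sub>C x0 \<in> sphere 0 1"
    by (simp add: norm_scaleC norm_divide)
  then have "sphere (0::'a) 1 \<noteq> {}"
    by blast
  then obtain xs where "\<And>n. xs n \<in> sphere 0 1" and lim: "(\<lambda>n. Re (f (xs n))) \<longlonglongrightarrow> M"
    by (rule obtain_maximizing_sequence[of _ "\<lambda>x. Re (f x)", OF _ bdd_above_Re_sphere[OF bnd],
          folded M_def]) blast
  then have unit: "\<And>n. norm (xs n) = 1"
    by simp
  obtain u where "xs \<longlonglongrightarrow> u"
    using Cauchy_if_maximizing[OF add bound \<open>0 < M\<close> unit lim]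
    by (auto simp: Cauchy_convergent_iff convergent_def)
  have "(\<lambda>n. norm (xs n)) \<longlonglongrightarrow> norm u"
    by (rule tendsto_norm[OF \<open>xs \<longlonglongrightarrow> u\<close>])
  then have "norm u = 1"
    by (simp add: unit LIMSEQ_const_iff)
  have "(\<lambda>n. Re (f (xs n))) \<longlonglongrightarrow> Re (f u)"
    using bounded_linear_if_clinear_bounded[OF add scal bnd]
    by (rule tendsto_Re[OF bounded_linear.tendsto[OF _ \<open>xs \<longlonglongrightarrow> u\<close>]])
  then have "Re (f u) = M"
    using lim LIMSEQ_unique by blast
  have "cmod (f u) \<le> Re (f u)"
    using bound[of u] \<open>norm u = 1\<close> \<open>Re (f u) = M\<close> by simp
  with \<open>Re (f u) = M\<close> have "f u = complex_of_real M"
    using cmod_le_Re_imp_of_real by metis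
  then show ?thesis
    using \<open>norm u = 1\<close> \<open>0 < M\<close> bound by blast
qed

lemma riesz_representation:
  fixes f :: "'a::complex_hilbert \<Rightarrow> complex"
  assumes add: "\<And>x y. f (x + y) = f x + f y"
    and scal: "\<And>c x. f (c *\<^sub>C x) = c * f x"
    and bnd: "\<And>x. cmod (f x) \<le> norm x * K"
  shows "\<exists>z. \<forall>x. f x = cinner z x"
proof (cases "\<forall>x. f x = 0")
  case True
  then show ?thesis
    using cinner_add_left[of "0::'a" 0] by (intro exI[of _ 0]) simp
next
  case False
  then obtain u M where u: "norm u = 1" "0 < M" "f u = complex_of_real M"
    and bound: "\<And>x. cmod (f x) \<le> M * norm x"
    using bounded_functional_attains_norm[OF add scal bnd] by blast
  have kernel_orth: "cinner u x = 0" if "f x = 0" for x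
  proof (rule cinner_eq_0_if_norm_le_norm_add)
    fix t
    have "cmod (f (u + t *\<^sub>C x)) = M"
      using u by (simp add: add scal that)
    then have "M * norm u \<le> M * norm (u + t *\<^sub>C x)"
      using bound[of "u + t *\<^sub>C x"] u(1) by simp
    then show "norm u \<le> norm (u + t *\<^sub>C x)"
      using u(2) by simp
  qed
  have "f x = cinner (complex_of_real M *\<^sub>C u) x" for x
  proof -
    let ?c = "- (f x / complex_of_real M)"
    have "cinner u (x + ?c *\<^sub>C u) = 0"
      by (rule kernel_orth) (use u in \<open>simp add: add scal\<close>)
    then have "cinner u x = f x / complex_of_real M"
      using u(1) by (simp add: cinner_add_right cinner_scaleC_right cinner_self)
    then show ?thesis
      using u(2) by (simp add: cinner_scaleC_left)
  qed
  then show ?thesis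
    by blast
qed

section \<open>Bounded operators and their adjoints\<close>

lemma clinear_op_add: "bounded_clinear_op T \<Longrightarrow> T (x + y) = T x + T y"
  by (simp add: bounded_clinear_op_def)

lemma clinear_op_scaleC: "bounded_clinear_op T \<Longrightarrow> T (c *\<^sub>C x) = c *\<^sub>C T x"
  by (simp add: bounded_clinear_op_def)

lemma clinear_op_diff: "bounded_clinear_op T \<Longrightarrow> T (x - y) = T x - T y"
  using clinear_op_add[of T x "- y"] clinear_op_scaleC[of T "-1" y]
  by (simp add: scaleC_minus1)

lemma bounded_clinear_op_pos_bound:
  "bounded_clinear_op T \<Longrightarrow> \<exists>K>0. \<forall>x. norm (T x) \<le> norm x * K"
proof -
  assume "bounded_clinear_op T"
  then obtain K where K: "\<And>x. norm (T x) \<le> norm x * K"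
    by (auto simp: bounded_clinear_op_def)
  have "norm x * K \<le> norm x * (max K 0 + 1)" for x :: 'a
    by (intro mult_left_mono) auto
  then have "norm (T x) \<le> norm x * (max K 0 + 1)" for x
    using K order_trans by blast
  then show ?thesis
    by (intro exI[of _ "max K 0 + 1"]) auto
qed

lemma bounded_clinear_opI:
  assumes "\<And>x y. T (x + y) = T x + T y" "\<And>c x. T (c *\<^sub>C x) = c *\<^sub>C T x"
    and "\<And>x. norm (T x) \<le> norm x * K"
  shows "bounded_clinear_op T"
  using assms unfolding bounded_clinear_op_def by blast

lemma bounded_clinear_op_add:
  assumes A: "bounded_clinear_op A" and B: "bounded_clinear_op B"
  shows "bounded_clinear_op (\<lambda>x. A x + B x)"
proof -
  obtain K1 K2 where "\<And>x. norm (A x) \<le> norm x * K1" "\<And>x. norm (B x) \<le> norm x * K2"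
    using A B bounded_clinear_op_def by metis
  then have "norm (A x + B x) \<le> norm x * (K1 + K2)" for x
    by (smt (verit) distrib_left norm_triangle_ineq)
  then show ?thesis
    using A B by (intro bounded_clinear_opI)
      (auto simp: clinear_op_add clinear_op_scaleC scaleC_add_right)
qed

lemma bounded_clinear_op_scaleC:
  assumes A: "bounded_clinear_op A"
  shows "bounded_clinear_op (\<lambda>x. c *\<^sub>C A x)"
proof -
  obtain K where K: "\<And>x. norm (A x) \<le> norm x * K"
    using A bounded_clinear_op_def by metis
  have "norm (c *\<^sub>C A x) \<le> norm x * (cmod c * K)" for x
    using mult_left_mono[OF K[of x], of "cmod c"] by (simp add: norm_scaleC mult_ac)
  then show ?thesis
    using A by (intro bounded_clinear_opI[where K = "cmod c * K"])
      (auto simp: clinear_op_add clinear_op_scaleC scaleC_add_right scaleC_scaleC mult.commute)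
qed

lemma bounded_clinear_op_compose:
  assumes A: "bounded_clinear_op A" and B: "bounded_clinear_op B"
  shows "bounded_clinear_op (\<lambda>x. A (B x))"
proof -
  obtain K1 where K1: "K1 > 0" "\<And>x. norm (A x) \<le> norm x * K1"
    using bounded_clinear_op_pos_bound[OF A] by blast
  obtain K2 where K2: "\<And>x. norm (B x) \<le> norm x * K2"
    using B bounded_clinear_op_def by metis
  have "norm (A (B x)) \<le> norm x * (K2 * K1)" for x
  proof -
    have "norm (A (B x)) \<le> norm (B x) * K1"
      by (rule K1(2))
    also have "\<dots> \<le> norm x * K2 * K1"
      using K1(1) K2 by (intro mult_right_mono) auto
    finally show ?thesis
      by (simp add: mult.assoc)
  qed
  then show ?thesis
    using A B by (intro bounded_clinear_opI) (auto simp: clinear_op_add clinear_op_scaleC)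
qed

lemma bounded_clinear_op_diff:
  assumes "bounded_clinear_op A" "bounded_clinear_op B"
  shows "bounded_clinear_op (\<lambda>x. A x - B x)"
  using bounded_clinear_op_add[OF assms(1) bounded_clinear_op_scaleC[OF assms(2), of "-1"]]
  by (simp add: scaleC_minus1)

lemma cadjoint_exists:
  assumes T: "bounded_clinear_op T"
  shows "\<exists>A. \<forall>x y. cinner (T x) y = cinner x (A y)"
proof -
  obtain K where K: "\<And>x. norm (T x) \<le> norm x * K"
    using T bounded_clinear_op_def by metis
  have "\<exists>z. \<forall>x. cinner y (T x) = cinner z x" for y
  proof (rule riesz_representation[where K = "norm y * K"])
    show "cmod (cinner y (T x)) \<le> norm x * (norm y * K)" for x
      using cinner_cauchy_schwarz[of y "T x"] mult_left_mono[OF K[of x], of "norm y"]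
      by (simp add: mult_ac)
  qed (simp_all add: clinear_op_add[OF T] clinear_op_scaleC[OF T] cinner_add_right
      cinner_scaleC_right)
  then obtain A where "\<And>y x. cinner y (T x) = cinner (A y) x"
    by metis
  then have "cinner (T x) y = cinner x (A y)" for x y
    using cinner_conj[of "T x" y] cinner_conj[of x "A y"] by simp
  then show ?thesis
    by blast
qed

lemma cinner_cadjoint: "bounded_clinear_op T \<Longrightarrow> cinner (T x) y = cinner x (cadjoint T y)"
  using someI_ex[OF cadjoint_exists[of T]] unfolding cadjoint_def by blast

lemma cinner_cadjoint_left: "bounded_clinear_op T \<Longrightarrow> cinner (cadjoint T x) y = cinner x (T y)"
  using cinner_cadjoint[of T y x] cinner_conj[of "cadjoint T x" y] cinner_conj[of x "T y"] by simp

lemma cadjoint_eqI: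
  assumes "bounded_clinear_op T" "\<And>x y. cinner (T x) y = cinner x (A y)"
  shows "cadjoint T = A"
proof
  fix y
  show "cadjoint T y = A y"
    by (rule cinner_eq_right_imp_eq) (simp add: cinner_cadjoint[OF assms(1), symmetric] assms(2))
qed

lemma bounded_clinear_op_cadjoint:
  assumes T: "bounded_clinear_op T"
  shows "bounded_clinear_op (cadjoint T)"
proof -
  obtain K where K: "\<And>x. norm (T x) \<le> norm x * K" "K > 0"
    using bounded_clinear_op_pos_bound[OF T] by blast
  have "norm (cadjoint T y) \<le> norm y * K" for y
  proof -
    let ?z = "cadjoint T y"
    have "norm ?z ^ 2 = Re (cinner (T ?z) y)"
      by (simp add: power2_norm_eq_cinner cinner_cadjoint[OF T])
    also have "\<dots> \<le> norm (T ?z) * norm y"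
      using complex_Re_le_cmod order_trans cinner_cauchy_schwarz by blast
    also have "\<dots> \<le> norm ?z * (norm y * K)"
      using mult_right_mono[OF K(1)[of ?z], of "norm y"] by (simp add: mult_ac)
    finally have "norm ?z * norm ?z \<le> norm ?z * (norm y * K)"
      by (simp add: power2_eq_square)
    then show ?thesis
      using K(2) by (cases "?z = 0") (simp_all add: mult_le_cancel_left_pos)
  qed
  moreover have "cadjoint T (x + y) = cadjoint T x + cadjoint T y" for x y
    by (rule cinner_eq_right_imp_eq)
      (simp add: cinner_cadjoint[OF T, symmetric] cinner_add_right)
  moreover have "cadjoint T (c *\<^sub>C x) = c *\<^sub>C cadjoint T x" for c x
    by (rule cinner_eq_right_imp_eq)
      (simp add: cinner_cadjoint[OF T, symmetric] cinner_scaleC_right)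
  ultimately show ?thesis
    by (intro bounded_clinear_opI)
qed

lemma cadjoint_scaleC:
  "bounded_clinear_op A \<Longrightarrow> cadjoint (\<lambda>x. c *\<^sub>C A x) = (\<lambda>x. cnj c *\<^sub>C cadjoint A x)"
  by (rule cadjoint_eqI[OF bounded_clinear_op_scaleC])
    (simp_all add: cinner_scaleC_left cinner_scaleC_right cinner_cadjoint)

lemma bounded_clinear_op_opRe: "bounded_clinear_op A \<Longrightarrow> bounded_clinear_op (opRe A)"
  unfolding opRe_def
  by (simp add: bounded_clinear_op_scaleC bounded_clinear_op_add bounded_clinear_op_cadjoint)

lemma cadjoint_sandwich_add:
  assumes T: "bounded_clinear_op T" and A: "bounded_clinear_op A"
  shows "cadjoint (\<lambda>x. T (A x) + A (cadjoint T x))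
    = (\<lambda>x. cadjoint A (cadjoint T x) + T (cadjoint A x))"
proof (rule cadjoint_eqI)
  show "bounded_clinear_op (\<lambda>x. T (A x) + A (cadjoint T x))"
    using T A by (simp add: bounded_clinear_op_add bounded_clinear_op_compose
        bounded_clinear_op_cadjoint)
qed (simp add: cinner_add_left cinner_add_right cinner_cadjoint[OF T] cinner_cadjoint[OF A]
    cinner_cadjoint_left[OF T])

lemma cadjoint_sandwich_diff:
  assumes T: "bounded_clinear_op T" and A: "bounded_clinear_op A"
  shows "cadjoint (\<lambda>x. T (A x) - A (cadjoint T x))
    = (\<lambda>x. cadjoint A (cadjoint T x) - T (cadjoint A x))"
proof (rule cadjoint_eqI)
  show "bounded_clinear_op (\<lambda>x. T (A x) - A (cadjoint T x))"
    using T A by (simp add: bounded_clinear_op_diff bounded_clinear_op_compose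
        bounded_clinear_op_cadjoint)
qed (simp add: cinner_diff_left cinner_diff_right cinner_cadjoint[OF T] cinner_cadjoint[OF A]
    cinner_cadjoint_left[OF T])

lemma opRe_sandwich_add:
  assumes T: "bounded_clinear_op T" and A: "bounded_clinear_op A"
  shows "opRe (\<lambda>x. T (A x) + A (cadjoint T x)) = (\<lambda>x. T (opRe A x) + opRe A (cadjoint T x))"
  using cadjoint_sandwich_add[OF T A]
  by (simp add: opRe_def clinear_op_add[OF T] clinear_op_scaleC[OF T] scaleC_add_right add_ac)

lemma opRe_sandwich_diff:
  assumes T: "bounded_clinear_op T" and A: "bounded_clinear_op A"
  defines "B \<equiv> \<lambda>x. \<i> *\<^sub>C A x"
  shows "opRe (\<lambda>x. T (A x) - A (cadjoint T x))
    = (\<lambda>x. (- \<i>) *\<^sub>C (T (opRe B x) - opRe B (cadjoint T x)))"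
proof -
  have "cadjoint B = (\<lambda>x. (- \<i>) *\<^sub>C cadjoint A x)"
    unfolding B_def using cadjoint_scaleC[OF A] by simp
  with cadjoint_sandwich_diff[OF T A] show ?thesis
    unfolding opRe_def B_def
    by (simp add: clinear_op_add[OF T] clinear_op_diff[OF T] clinear_op_scaleC[OF T]
        scaleC_add_right scaleC_diff_right scaleC_scaleC scaleC_minus_left algebra_simps)
qed

section \<open>Algebra norms and the generalized numerical radius\<close>

lemma algebra_norm_nonneg: "algebra_norm N \<Longrightarrow> bounded_clinear_op A \<Longrightarrow> 0 \<le> N A"
  by (simp add: algebra_norm_def)

lemma algebra_norm_scaleC:
  "algebra_norm N \<Longrightarrow> bounded_clinear_op A \<Longrightarrow> N (\<lambda>x. c *\<^sub>C A x) = cmod c * N A"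
  by (simp add: algebra_norm_def)

lemma algebra_norm_add_le:
  "algebra_norm N \<Longrightarrow> bounded_clinear_op A \<Longrightarrow> bounded_clinear_op B \<Longrightarrow>
    N (\<lambda>x. A x + B x) \<le> N A + N B"
  by (simp add: algebra_norm_def)

lemma algebra_norm_diff_le:
  assumes N: "algebra_norm N" and A: "bounded_clinear_op A" and B: "bounded_clinear_op B"
  shows "N (\<lambda>x. A x - B x) \<le> N A + N B"
  using algebra_norm_add_le[OF N A bounded_clinear_op_scaleC[OF B, of "-1"]]
    algebra_norm_scaleC[OF N B, of "-1"]
  by (simp add: scaleC_minus1)

lemma algebra_norm_compose_le:
  "algebra_norm N \<Longrightarrow> bounded_clinear_op A \<Longrightarrow> bounded_clinear_op B \<Longrightarrow>
    N (\<lambda>x. A (B x)) \<le> N A * N B"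
  unfolding algebra_norm_def comp_def by blast

lemma algebra_norm_opRe_le:
  assumes N: "algebra_norm N" and A: "bounded_clinear_op A"
  shows "N (opRe A) \<le> (N A + N (cadjoint A)) / 2"
proof -
  have A': "bounded_clinear_op (cadjoint A)"
    by (rule bounded_clinear_op_cadjoint[OF A])
  show ?thesis
    using algebra_norm_scaleC[OF N bounded_clinear_op_add[OF A A'], of "1/2"]
      algebra_norm_add_le[OF N A A']
    by (simp add: opRe_def)
qed

lemma algebra_norm_sandwich_add_le:
  assumes N: "algebra_norm N" and T: "bounded_clinear_op T" and R: "bounded_clinear_op R"
  shows "N (\<lambda>x. T (R x) + R (cadjoint T x)) \<le> N R * (N T + N (cadjoint T))"
proof -
  have T': "bounded_clinear_op (cadjoint T)"
    by (rule bounded_clinear_op_cadjoint[OF T])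
  have "N (\<lambda>x. T (R x) + R (cadjoint T x)) \<le> N (\<lambda>x. T (R x)) + N (\<lambda>x. R (cadjoint T x))"
    using bounded_clinear_op_compose[OF T R] bounded_clinear_op_compose[OF R T']
    by (rule algebra_norm_add_le[OF N])
  also have "\<dots> \<le> N T * N R + N R * N (cadjoint T)"
    by (intro add_mono algebra_norm_compose_le[OF N T R] algebra_norm_compose_le[OF N R T'])
  finally show ?thesis
    by (simp add: algebra_simps)
qed

lemma algebra_norm_sandwich_diff_le:
  assumes N: "algebra_norm N" and T: "bounded_clinear_op T" and R: "bounded_clinear_op R"
  shows "N (\<lambda>x. T (R x) - R (cadjoint T x)) \<le> N R * (N T + N (cadjoint T))"
proof -
  have T': "bounded_clinear_op (cadjoint T)"
    by (rule bounded_clinear_op_cadjoint[OF T])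
  have "N (\<lambda>x. T (R x) - R (cadjoint T x)) \<le> N (\<lambda>x. T (R x)) + N (\<lambda>x. R (cadjoint T x))"
    using bounded_clinear_op_compose[OF T R] bounded_clinear_op_compose[OF R T']
    by (rule algebra_norm_diff_le[OF N])
  also have "\<dots> \<le> N T * N R + N R * N (cadjoint T)"
    by (intro add_mono algebra_norm_compose_le[OF N T R] algebra_norm_compose_le[OF N R T'])
  finally show ?thesis
    by (simp add: algebra_simps)
qed

lemma bdd_above_wN:
  assumes N: "algebra_norm N" and S: "bounded_clinear_op S"
  shows "bdd_above (range (\<lambda>\<theta>. N (opRe (\<lambda>x. exp (\<i> * complex_of_real \<theta>) *\<^sub>C S x))))"
proof (rule bdd_aboveI2)
  fix \<theta> :: real
  let ?cS = "\<lambda>x. exp (\<i> * complex_of_real \<theta>) *\<^sub>C S x"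
  have "N (opRe ?cS) \<le> (N ?cS + N (cadjoint ?cS)) / 2"
    by (rule algebra_norm_opRe_le[OF N bounded_clinear_op_scaleC[OF S]])
  also have "\<dots> = (N S + N (cadjoint S)) / 2"
    using S by (simp add: cadjoint_scaleC algebra_norm_scaleC[OF N] bounded_clinear_op_cadjoint)
  finally show "N (opRe ?cS) \<le> (N S + N (cadjoint S)) / 2" .
qed

lemma algebra_norm_opRe_le_wN:
  assumes N: "algebra_norm N" and S: "bounded_clinear_op S" and "cmod c = 1"
  shows "N (opRe (\<lambda>x. c *\<^sub>C S x)) \<le> wN N S"
proof -
  have "N (opRe (\<lambda>x. exp (\<i> * complex_of_real (Arg2pi c)) *\<^sub>C S x)) \<le> wN N S"
    unfolding wN_def by (rule cSUP_upper[OF UNIV_I bdd_above_wN[OF N S]])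
  then show ?thesis
    using \<open>cmod c = 1\<close> complex_norm_eq_1_exp by simp
qed

lemma wN_le:
  assumes "\<And>c. cmod c = 1 \<Longrightarrow> N (opRe (\<lambda>x. c *\<^sub>C A x)) \<le> B"
  shows "wN N A \<le> B"
  unfolding wN_def using assms by (intro cSUP_least) auto

lemma wN_sandwich_add_le:
  assumes N: "algebra_norm N" and T: "bounded_clinear_op T" and S: "bounded_clinear_op S"
  shows "wN N (\<lambda>x. T (S x) + S (cadjoint T x)) \<le> wN N S * (N T + N (cadjoint T))"
    (is "_ \<le> ?B")
proof (rule wN_le)
  fix c :: complex
  assume "cmod c = 1"
  let ?R = "opRe (\<lambda>x. c *\<^sub>C S x)"
  have cS: "bounded_clinear_op (\<lambda>x. c *\<^sub>C S x)"
    by (rule bounded_clinear_op_scaleC[OF S])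
  have "N (opRe (\<lambda>x. c *\<^sub>C (T (S x) + S (cadjoint T x)))) = N (\<lambda>x. T (?R x) + ?R (cadjoint T x))"
    using opRe_sandwich_add[OF T cS] by (simp add: clinear_op_scaleC[OF T] scaleC_add_right)
  also have "\<dots> \<le> N ?R * (N T + N (cadjoint T))"
    by (rule algebra_norm_sandwich_add_le[OF N T bounded_clinear_op_opRe[OF cS]])
  also have "\<dots> \<le> ?B"
    using T by (intro mult_right_mono algebra_norm_opRe_le_wN[OF N S \<open>cmod c = 1\<close>]
        add_nonneg_nonneg algebra_norm_nonneg[OF N] bounded_clinear_op_cadjoint)
  finally show "N (opRe (\<lambda>x. c *\<^sub>C (T (S x) + S (cadjoint T x)))) \<le> ?B" .
qed

lemma wN_sandwich_diff_le:
  assumes N: "algebra_norm N" and T: "bounded_clinear_op T" and S: "bounded_clinear_op S"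
  shows "wN N (\<lambda>x. T (S x) - S (cadjoint T x)) \<le> wN N S * (N T + N (cadjoint T))"
    (is "_ \<le> ?B")
proof (rule wN_le)
  fix c :: complex
  assume "cmod c = 1"
  then have "cmod (\<i> * c) = 1"
    by (simp add: norm_mult)
  let ?R = "opRe (\<lambda>x. (\<i> * c) *\<^sub>C S x)"
  have cS: "bounded_clinear_op (\<lambda>x. c *\<^sub>C S x)"
    by (rule bounded_clinear_op_scaleC[OF S])
  have R: "bounded_clinear_op ?R"
    by (rule bounded_clinear_op_opRe[OF bounded_clinear_op_scaleC[OF S]])
  have "N (opRe (\<lambda>x. c *\<^sub>C (T (S x) - S (cadjoint T x))))
      = N (\<lambda>x. (- \<i>) *\<^sub>C (T (?R x) - ?R (cadjoint T x)))"
    using opRe_sandwich_diff[OF T cS]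
    by (simp add: clinear_op_scaleC[OF T] scaleC_diff_right scaleC_scaleC)
  also have "\<dots> = N (\<lambda>x. T (?R x) - ?R (cadjoint T x))"
    using T R by (simp add: algebra_norm_scaleC[OF N] bounded_clinear_op_diff
        bounded_clinear_op_compose bounded_clinear_op_cadjoint)
  also have "\<dots> \<le> N ?R * (N T + N (cadjoint T))"
    by (rule algebra_norm_sandwich_diff_le[OF N T R])
  also have "\<dots> \<le> ?B"
    using T by (intro mult_right_mono algebra_norm_opRe_le_wN[OF N S \<open>cmod (\<i> * c) = 1\<close>]
        add_nonneg_nonneg algebra_norm_nonneg[OF N] bounded_clinear_op_cadjoint)
  finally show "N (opRe (\<lambda>x. c *\<^sub>C (T (S x) - S (cadjoint T x)))) \<le> ?B" .
qed

theorem theorem2p5: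
  fixes T S :: "'a::complex_hilbert \<Rightarrow> 'a"
    and N :: "('a \<Rightarrow> 'a) \<Rightarrow> real"
  assumes "bounded_clinear_op T" and "bounded_clinear_op S" and "algebra_norm N"
  shows "wN N (\<lambda>x. T (S x) + S (cadjoint T x)) \<le> wN N S * (N T + N (cadjoint T)) \<and>
         wN N (\<lambda>x. T (S x) - S (cadjoint T x)) \<le> wN N S * (N T + N (cadjoint T)) \<and>
         (self_adjoint_norm N \<longrightarrow>
            wN N (\<lambda>x. T (S x) + S (cadjoint T x)) \<le> 2 * wN N S * N T \<and>
            wN N (\<lambda>x. T (S x) - S (cadjoint T x)) \<le> 2 * wN N S * N T)"
proof -
  have "self_adjoint_norm N \<Longrightarrow> wN N S * (N T + N (cadjoint T)) = 2 * wN N S * N T"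
    using assms(1) by (simp add: self_adjoint_norm_def)
  then show ?thesis
    using wN_sandwich_add_le[OF assms(3,1,2)] wN_sandwich_diff_le[OF assms(3,1,2)] by auto
qed

end
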